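(* For any compact set $K\subset\mathbb C\setminus\partial\Delta$ there is $\delta>0$ such that in either of the cases (1) $p\in K$, $|p|>1$, $|q|<1$ and $\operatorname{dist}(q,\partial\Delta)<\delta$, or (2) $q\in K$, $|q|<1$, $|p|>1$ and $\operatorname{dist}(p,\partial\Delta)<\delta$, the Blaschke product $B_{p,q}$ has at least two distinct critical points on $\partial\Delta$.
   Context: $\Delta$ is the unit disk. For $|p|>1$, $|q|<1$, $B_{p,q}(z)=z\,\frac{z-p}{1-\bar pz}\,\frac{z-q}{1-\bar qz}$. *)

theory Defs
  imports "HOL-Analysis.Analysis"
begin

definition blaschke :: "complex \<Rightarrow> complex \<Rightarrow> complex \<Rightarrow> complex" where
  "blaschke p q z = z * ((z - p) / (1 - cnj p * z)) * ((z - q) / (1 - cnj q * z))"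

end

theory Submission
  imports Defs
begin

(* For |z| = 1 and |a| <> 1, with the boundary Poisson kernel P_a(z) = (1 - |a|^2)/|z - a|^2,
       B'(z) = (z-p)/(1 - conj p z) * (z-q)/(1 - conj q z) * A(z),   A = 1 + P_p + P_q,
   so every zero of the real function A on the circle is a critical point of B.  The circle
   stays connected after removing a point, so a continuous A changing sign on it has two zeros.

   After this topological fact and the derivative formula, elementary estimates of P_a give
   the sign change in both cases: if p is outside and away from the circle while q is close
   to it, A is large at q/|q| and negative at a point with |z-p|^2 = |p|(|p|-1) far from q;
   if q is inside and away from the circle while p is close to it, A is very negative at
   p/|p| and positive at -p/|p|.  Compactness of K supplies the uniform constants. *)

lemma connected_ivt_zero:
  fixes f :: "'a::topological_space \<Rightarrow> real"
  assumes "connected S" "continuous_on S f" "a \<in> S" "b \<in> S" "f a < 0" "0 < f b"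
  shows "\<exists>z\<in>S. f z = 0"
proof -
  have "connected (f ` S)" using assms(1,2) connected_continuous_image by blast
  then have "0 \<in> f ` S" using connectedD_interval[of "f ` S" "f a" "f b" 0] assms(3-6) by auto
  then show ?thesis by (metis imageE)
qed

(* A sphere with one point removed is homeomorphic to a hyperplane, hence connected. *)
lemma connected_punctured_sphere:
  fixes a b :: "'a::euclidean_space"
  assumes "0 < r" "b \<in> sphere a r"
  shows "connected (sphere a r - {b})"
proof -
  obtain c :: 'a where "c \<in> Basis" using nonempty_Basis by blast
  then have "(sphere a r - {b}) homeomorphic {x. c \<bullet> x = 0}"
    using assms by (intro homeomorphic_punctured_sphere_hyperplane) auto
  moreover have "connected {x::'a. c \<bullet> x = 0}"
    by (simp add: convex_connected convex_hyperplane)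
  ultimately show ?thesis using homeomorphic_connectedness by blast
qed

(* A continuous real function that changes sign on a sphere of dimension at least one has
   two distinct zeros: one by the intermediate value theorem, and a second one on the
   sphere punctured at the first zero, which is still connected. *)
lemma sphere_two_zeros:
  fixes f :: "'a::euclidean_space \<Rightarrow> real"
  assumes dim: "2 \<le> DIM('a)" and r: "0 < r" and cont: "continuous_on (sphere c r) f"
    and ab: "a \<in> sphere c r" "b \<in> sphere c r" and sign: "f a < 0" "0 < f b"
  shows "\<exists>z1 z2. z1 \<noteq> z2 \<and> z1 \<in> sphere c r \<and> z2 \<in> sphere c r \<and> f z1 = 0 \<and> f z2 = 0"
proof -
  obtain z1 where z1: "z1 \<in> sphere c r" "f z1 = 0"
    using connected_ivt_zero[OF connected_sphere[OF dim] cont ab sign] by blast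
  have "a \<noteq> z1" "b \<noteq> z1" using sign z1(2) by auto
  then have "a \<in> sphere c r - {z1}" "b \<in> sphere c r - {z1}" using ab by auto
  then obtain z2 where z2: "z2 \<in> sphere c r - {z1}" "f z2 = 0"
    using connected_ivt_zero[OF connected_punctured_sphere[OF r z1(1)]
        continuous_on_subset[OF cont] _ _ sign] by blast
  show ?thesis using z1 z2 by blast
qed

definition poisson_kernel :: "complex \<Rightarrow> complex \<Rightarrow> real" where
  "poisson_kernel a z = (1 - (norm a)^2) / (norm (z - a))^2"

(* For z = exp(i t), this is the derivative of arg B_{p,q}(exp(i t)) with respect to t;
   its zeros on the circle are exactly the critical points of B_{p,q} there. *)
definition arg_derivative :: "complex \<Rightarrow> complex \<Rightarrow> complex \<Rightarrow> real" where
  "arg_derivative p q z = 1 + poisson_kernel p z + poisson_kernel q z"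

lemma blaschke_denominator_nonzero:
  assumes "norm z = 1" "norm a \<noteq> 1"
  shows "1 - cnj a * z \<noteq> 0"
proof
  assume "1 - cnj a * z = 0"
  then have "norm (cnj a * z) = 1" by simp
  then show False using assms by (simp add: norm_mult)
qed

lemma blaschke_factor_deriv:
  assumes "1 - cnj a * z \<noteq> 0"
  shows "((\<lambda>w. (w - a) / (1 - cnj a * w)) has_field_derivative
           (1 - cnj a * a) / (1 - cnj a * z)^2) (at z)"
  using assms
  by (auto intro!: derivative_eq_intros simp: power2_eq_square field_simps)

(* On the circle, z times the derivative of a Blaschke factor is the factor itself times
   the Poisson kernel; this uses 1 - conj a z = z conj (z - a) when |z| = 1. *)
lemma blaschke_factor_deriv_circle:
  assumes z: "norm z = 1" and a: "norm a \<noteq> 1"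
  shows "z * ((1 - cnj a * a) / (1 - cnj a * z)^2)
           = (z - a) / (1 - cnj a * z) * of_real (poisson_kernel a z)"
proof -
  define w where "w = cnj (z - a)"
  have "z * cnj z = 1" using z by (metis complex_norm_square mult.commute of_real_1 power_one)
  then have den: "1 - cnj a * z = z * w" by (simp add: w_def algebra_simps)
  have "z \<noteq> a" using z a by auto
  then have nz: "w \<noteq> 0" "z - a \<noteq> 0" "z \<noteq> 0" using z by (auto simp: w_def)
  have "complex_of_real ((norm a)^2) = cnj a * a"
    using complex_norm_square[of a] by (simp add: mult.commute)
  then have P: "of_real (poisson_kernel a z) = (1 - cnj a * a) / ((z - a) * w)"
    unfolding poisson_kernel_def of_real_divide of_real_diff of_real_1
      complex_norm_square[of "z - a"] w_def by simp
  show ?thesis unfolding den P using nz by (simp add: field_simps power2_eq_square)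
qed

lemma blaschke_deriv_circle:
  assumes z: "norm z = 1" and p: "norm p \<noteq> 1" and q: "norm q \<noteq> 1"
  shows "deriv (blaschke p q) z
           = (z - p) / (1 - cnj p * z) * ((z - q) / (1 - cnj q * z)) * of_real (arg_derivative p q z)"
proof -
  define fp where "fp w = (w - p) / (1 - cnj p * w)" for w
  define fq where "fq w = (w - q) / (1 - cnj q * w)" for w
  define dp where "dp = (1 - cnj p * p) / (1 - cnj p * z)^2"
  define dq where "dq = (1 - cnj q * q) / (1 - cnj q * z)^2"
  have "blaschke p q = (\<lambda>w. w * fp w * fq w)"
    by (simp add: blaschke_def fp_def fq_def fun_eq_iff)
  moreover have "((\<lambda>w. w * fp w * fq w) has_field_derivative
                   (1 * fp z + dp * z) * fq z + dq * (z * fp z)) (at z)"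
    unfolding fp_def fq_def dp_def dq_def
    by (intro DERIV_mult DERIV_ident blaschke_factor_deriv blaschke_denominator_nonzero z p q)
  ultimately have "deriv (blaschke p q) z = (1 * fp z + dp * z) * fq z + dq * (z * fp z)"
    using DERIV_imp_deriv by simp
  also have "\<dots> = fp z * fq z * (1 + of_real (poisson_kernel p z) + of_real (poisson_kernel q z))"
  proof -
    have "dp * z = fp z * of_real (poisson_kernel p z)" "dq * z = fq z * of_real (poisson_kernel q z)"
      using blaschke_factor_deriv_circle[OF z p] blaschke_factor_deriv_circle[OF z q]
      unfolding fp_def fq_def dp_def dq_def by (simp_all add: mult.commute)
    then show ?thesis by (simp add: algebra_simps)
  qed
  finally show ?thesis by (simp add: fp_def fq_def arg_derivative_def)
qed

lemma polar_unit:
  fixes a :: complex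
  obtains u where "norm u = 1" "a = of_real (norm a) * u"
proof (cases "a = 0")
  case True
  then show ?thesis using that[of 1] by simp
next
  case False
  then show ?thesis using that[of "a / of_real (norm a)"] by (simp add: norm_divide)
qed

lemma poisson_kernel_radial:
  assumes u: "norm u = 1" and r: "0 \<le> r" "r \<noteq> 1"
  shows "poisson_kernel (of_real r * u) u = (1 + r) / (1 - r)"
    and "poisson_kernel (of_real r * u) (- u) = (1 - r) / (1 + r)"
proof -
  have "u - of_real r * u = of_real (1 - r) * u" "- u - of_real r * u = - (of_real (1 + r) * u)"
    by (simp_all add: algebra_simps)
  then have "norm (u - of_real r * u) = \<bar>1 - r\<bar>" "norm (- u - of_real r * u) = 1 + r"
    using u r by (simp_all only: norm_minus_cancel norm_mult norm_of_real) simp_all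
  moreover have "(1 - r^2) / (1 - r)^2 = (1 + r) / (1 - r)" "(1 - r^2) / (1 + r)^2 = (1 - r) / (1 + r)"
  proof -
    have "1 - r \<noteq> 0" "1 + r \<noteq> 0" and sq: "1 - r^2 = (1 - r) * (1 + r)"
      using r by (auto simp: algebra_simps power2_eq_square)
    then show "(1 - r^2) / (1 - r)^2 = (1 + r) / (1 - r)" "(1 - r^2) / (1 + r)^2 = (1 - r) / (1 + r)"
      unfolding sq by (simp_all add: power2_eq_square)
  qed
  ultimately show "poisson_kernel (of_real r * u) u = (1 + r) / (1 - r)"
    "poisson_kernel (of_real r * u) (- u) = (1 - r) / (1 + r)"
    using u r by (simp_all add: poisson_kernel_def norm_mult power2_abs)
qed

lemma poisson_kernel_nonneg:
  assumes "norm a \<le> 1"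
  shows "0 \<le> poisson_kernel a z"
  using assms by (simp add: poisson_kernel_def abs_square_le_1)

lemma poisson_kernel_inner_upper:
  assumes a: "norm a < 1"
  shows "poisson_kernel a z \<le> 2 * (1 - norm a) / (norm (z - a))^2"
proof -
  have "1 - (norm a)^2 = (1 - norm a) * (1 + norm a)" by (simp add: algebra_simps power2_eq_square)
  also have "\<dots> \<le> (1 - norm a) * 2" using a by (intro mult_left_mono) auto
  finally show ?thesis unfolding poisson_kernel_def by (simp add: divide_right_mono)
qed

lemma poisson_kernel_outer_lower:
  assumes z: "norm z = 1" and d: "0 < d" and a: "1 + d \<le> norm a" "norm a \<le> R"
  shows "- (R^2 / d^2) \<le> poisson_kernel a z"
proof -
  have "d \<le> norm (z - a)" using norm_triangle_ineq2[of a z] z a by (simp add: norm_minus_commute)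
  then have "d^2 \<le> (norm (z - a))^2" using d by (simp add: power_mono)
  moreover have "(norm a)^2 - 1 \<le> R^2" using a d by (smt (verit) power_mono norm_ge_zero)
  ultimately have "((norm a)^2 - 1) / (norm (z - a))^2 \<le> R^2 / d^2"
    using a d by (intro frac_le) (auto simp: power_mono)
  moreover have "poisson_kernel a z = - (((norm a)^2 - 1) / (norm (z - a))^2)"
    unfolding poisson_kernel_def by (metis minus_diff_eq minus_divide_left)
  ultimately show ?thesis by linarith
qed

lemma poisson_kernel_level:
  assumes a: "1 < norm a" and za: "(norm (z - a))^2 = norm a * (norm a - 1)"
  shows "1 + poisson_kernel a z = - 1 / norm a"
proof -
  have "1 - (norm a)^2 = - ((norm a - 1) * (norm a + 1))" by (simp add: algebra_simps power2_eq_square)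
  then have "poisson_kernel a z = - ((norm a + 1) / norm a)"
    using a unfolding poisson_kernel_def za by (simp add: mult.commute)
  moreover have "norm a \<noteq> 0" using a by linarith
  ultimately show ?thesis by (simp add: field_simps)
qed

(* The level set above meets the circle in two points at mutual distance 2s with
   s^2 = (r-1)(3r+1)/(4r^2) >= (r-1)/(2r), r = |p|; one of them is at distance at least s
   from any given q.  The points are u (c +- i s) where p = r u and c = (r+1)/(2r). *)
lemma level_point_far_from:
  fixes p q :: complex
  assumes p: "1 < norm p"
  shows "\<exists>z. norm z = 1 \<and> (norm (z - p))^2 = norm p * (norm p - 1) \<and>
             (norm p - 1) / (2 * norm p) \<le> (norm (z - q))^2"
proof -
  define r where "r = norm p"
  have r: "1 < r" using p r_def by simp
  obtain u where u: "norm u = 1" "p = of_real r * u" using polar_unit r_def by metis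
  define c where "c = (r + 1) / (2 * r)"
  define s where "s = sqrt (1 - c^2)"
  have c2: "1 - c^2 = (r - 1) * (3 * r + 1) / (4 * r^2)"
    using r by (simp add: c_def field_simps power2_eq_square)
  then have s2: "s^2 = 1 - c^2" unfolding s_def using r by (simp add: zero_le_mult_iff)
  have s0: "0 \<le> s" unfolding s_def using c2 r by (simp add: zero_le_mult_iff)
  have s_lower: "(r - 1) / (2 * r) \<le> s^2"
    unfolding s2 c2 using r by (simp add: field_simps power2_eq_square) (use mult_mono[of 1 r 1 r] in simp)
  have unit_level: "norm (Complex c t) = 1 \<and> (norm (Complex c t - of_real r))^2 = r * (r - 1)"
    if "t^2 = s^2" for t
  proof -
    have "2 * r * c = r + 1" using r by (simp add: c_def)
    moreover have "r \<le> r * r" using r mult_left_mono[of 1 r r] by simp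
    ultimately show ?thesis using that s2
      by (simp add: cmod_def power2_eq_square algebra_simps)
  qed
  define z1 where "z1 = u * Complex c s"
  define z2 where "z2 = u * Complex c (- s)"
  have on_level: "norm z = 1 \<and> (norm (z - p))^2 = r * (r - 1)" if z: "z = z1 \<or> z = z2" for z
  proof -
    obtain t where t: "t^2 = s^2" "z = u * Complex c t" using z z1_def z2_def by (metis power2_minus)
    have "z - p = u * (Complex c t - of_real r)" using t(2) u(2) by (simp add: algebra_simps)
    then show ?thesis using unit_level[OF t(1)] t(2) u(1) by (simp add: norm_mult)
  qed
  have "2 * s = norm (z1 - z2)"
  proof -
    have "z1 - z2 = u * Complex 0 (2 * s)" by (simp add: z1_def z2_def algebra_simps complex_eq_iff)
    then show ?thesis using s0 u by (simp add: norm_mult cmod_eq_Im)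
  qed
  also have "\<dots> \<le> norm (z1 - q) + norm (z2 - q)"
    using norm_triangle_ineq4[of "z1 - q" "z2 - q"] by simp
  finally have "s \<le> norm (z1 - q) \<or> s \<le> norm (z2 - q)" by linarith
  then obtain z where z: "z = z1 \<or> z = z2" "s \<le> norm (z - q)" by blast
  then have "s^2 \<le> (norm (z - q))^2" using s0 by (simp add: power_mono)
  then show ?thesis using on_level[OF z(1)] s_lower r_def by (metis order_trans)
qed

(* Case 1, negative value: p outside and away from the circle, q inside and close to it.
   At a level point of p far from q, the small term P_q cannot compensate -1/|p|. *)
lemma negative_point_inner_near_circle:
  assumes d: "0 < d" and p: "1 + d \<le> norm p" "norm p \<le> R"
    and q: "norm q < 1" "1 - norm q < d / (8 * R^2)"
  shows "\<exists>z\<in>sphere 0 1. arg_derivative p q z < 0"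
proof -
  define r where "r = norm p"
  have r: "1 + d \<le> r" "r \<le> R" using p r_def by auto
  obtain z where z: "norm z = 1" "(norm (z - p))^2 = r * (r - 1)" "(r - 1) / (2 * r) \<le> (norm (z - q))^2"
    using level_point_far_from[of p q] p d r_def by auto
  have pos: "0 < r - 1" "0 < (r - 1) / (2 * r)" using r d by auto
  have "poisson_kernel q z \<le> 2 * (1 - norm q) / (norm (z - q))^2"
    by (rule poisson_kernel_inner_upper[OF q(1)])
  also have "\<dots> \<le> 2 * (1 - norm q) / ((r - 1) / (2 * r))"
  proof (rule divide_left_mono[OF z(3)])
    show "0 \<le> 2 * (1 - norm q)" using q by simp
    have "0 < (norm (z - q))^2" using z(3) pos(2) by linarith
    then show "0 < (norm (z - q))^2 * ((r - 1) / (2 * r))" using pos(2) by (rule mult_pos_pos)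
  qed
  also have "\<dots> = 4 * r * (1 - norm q) / (r - 1)" using pos by (simp add: field_simps)
  also have "\<dots> \<le> 4 * r * (d / (8 * R^2)) / (r - 1)"
    using q pos r d by (intro divide_right_mono mult_left_mono) auto
  also have "\<dots> \<le> 4 * r * ((r - 1) / (8 * r^2)) / (r - 1)"
    using r d pos by (intro divide_right_mono mult_left_mono frac_le power_mono) auto
  also have "\<dots> = 1 / (2 * r)" using pos by (simp add: field_simps power2_eq_square)
  finally have "poisson_kernel q z \<le> 1 / (2 * r)" .
  moreover have "1 + poisson_kernel p z = - 1 / r"
    using poisson_kernel_level[of p z] z(2) p d r_def by simp
  moreover have "1 / (2 * r) < 1 / r" using pos by (simp add: field_simps)
  ultimately have "arg_derivative p q z < 0" unfolding arg_derivative_def by simp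
  then show ?thesis using z(1) by auto
qed

(* Case 1, positive value: at q/|q| the kernel of q equals (1+|q|)/(1-|q|), which beats
   the bounded negative contribution of p. *)
lemma positive_point_inner_near_circle:
  assumes d: "0 < d" and p: "1 + d \<le> norm p" "norm p \<le> R"
    and q: "norm q < 1" "1 - norm q < d^2 / R^2"
  shows "\<exists>z\<in>sphere 0 1. 0 < arg_derivative p q z"
proof -
  obtain v where v: "norm v = 1" "q = of_real (norm q) * v" using polar_unit by metis
  have "- (R^2 / d^2) \<le> poisson_kernel p v"
    using poisson_kernel_outer_lower[OF v(1) d p] .
  moreover have "poisson_kernel q v = (1 + norm q) / (1 - norm q)"
    using poisson_kernel_radial(1)[OF v(1), of "norm q"] q v(2) by simp
  moreover have "R^2 / d^2 < 1 / (1 - norm q)"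
  proof -
    have "0 < R" using p d by linarith
    then have "(1 - norm q) * R^2 < d^2" using q by (simp add: field_simps)
    then show ?thesis using q d by (simp add: field_simps)
  qed
  moreover have "1 / (1 - norm q) \<le> (1 + norm q) / (1 - norm q)"
    using q by (intro divide_right_mono) auto
  ultimately have "0 < arg_derivative p q v" unfolding arg_derivative_def by linarith
  then show ?thesis using v(1) by auto
qed

(* At u = p/|p|
   the kernel of p is -1 - 2/(|p| - 1), which dominates the bounded kernel of q; at -u
   the kernel of p exceeds -1 while that of q is nonnegative. *)
lemma sign_change_outer_near_circle:
  assumes d: "0 < d" and q: "norm q \<le> 1 - d"
    and p: "1 < norm p" "norm p - 1 < d^2"
  shows "\<exists>z\<in>sphere 0 1. arg_derivative p q z < 0"
    and "\<exists>z\<in>sphere 0 1. 0 < arg_derivative p q z"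
proof -
  obtain u where u: "norm u = 1" "p = of_real (norm p) * u" using polar_unit by metis
  have q1: "norm q < 1" using q d by simp
  have "poisson_kernel p u = (1 + norm p) / (1 - norm p)"
    using poisson_kernel_radial(1)[OF u(1), of "norm p"] p u(2) by simp
  also have "\<dots> = -1 - 2 / (norm p - 1)" using p by (simp add: field_simps)
  finally have Pp: "poisson_kernel p u = -1 - 2 / (norm p - 1)" .
  have "d \<le> norm (u - q)" using norm_triangle_ineq2[of u q] u q by simp
  then have "d^2 \<le> (norm (u - q))^2" using d by (simp add: power_mono)
  have "poisson_kernel q u \<le> 2 * (1 - norm q) / (norm (u - q))^2"
    by (rule poisson_kernel_inner_upper[OF q1])
  also have "\<dots> \<le> 2 * (1 - norm q) / d^2"
    using \<open>d^2 \<le> (norm (u - q))^2\<close> d q1 by (intro divide_left_mono mult_pos_pos) auto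
  also have "\<dots> \<le> 2 / d^2" using q1 d by (simp add: divide_right_mono)
  also have "\<dots> < 2 / (norm p - 1)" using p d by (intro divide_strict_left_mono) auto
  finally have "arg_derivative p q u < 0" unfolding arg_derivative_def Pp by simp
  then show "\<exists>z\<in>sphere 0 1. arg_derivative p q z < 0" using u(1) by auto
  have "poisson_kernel p (- u) = (1 - norm p) / (1 + norm p)"
    using poisson_kernel_radial(2)[OF u(1), of "norm p"] p u(2) by simp
  moreover have "(1 - norm p) / (1 + norm p) > -1" using p by (simp add: field_simps)
  moreover have "0 \<le> poisson_kernel q (- u)" using q1 by (simp add: poisson_kernel_nonneg)
  ultimately have "0 < arg_derivative p q (- u)" unfolding arg_derivative_def by linarith
  then show "\<exists>z\<in>sphere 0 1. 0 < arg_derivative p q z" using u(1) by (intro bexI[of _ "- u"]) auto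
qed

(* The distance to the unit circle is | |x| - 1 |. *)
lemma infdist_unit_circle_lower:
  fixes x :: complex
  shows "\<bar>norm x - 1\<bar> \<le> infdist x (sphere 0 1)"
proof -
  have ne: "sphere (0::complex) 1 \<noteq> {}" using sphere_eq_empty by fastforce
  have "\<bar>norm x - 1\<bar> \<le> dist x y" if "y \<in> sphere 0 1" for y
    using that norm_triangle_ineq3[of x y] by (simp add: dist_norm)
  then show ?thesis unfolding infdist_notempty[OF ne] by (intro cINF_greatest[OF ne]) auto
qed

lemma compact_avoiding_circle_bounds:
  fixes K :: "complex set"
  assumes "compact K" "K \<inter> sphere 0 1 = {}"
  obtains d R where "0 < d" "0 < R" "\<And>x. x \<in> K \<Longrightarrow> d \<le> \<bar>norm x - 1\<bar> \<and> norm x \<le> R"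
proof -
  obtain R where R: "0 < R" "\<And>x. x \<in> K \<Longrightarrow> norm x \<le> R"
    using compact_imp_bounded[OF assms(1)] bounded_pos by blast
  show ?thesis
  proof (cases "K = {}")
    case True
    then show ?thesis using that[of 1 R] R by simp
  next
    case False
    have "continuous_on K (\<lambda>x. \<bar>norm x - 1\<bar>)" by (intro continuous_intros)
    then obtain x0 where x0: "x0 \<in> K" "\<And>y. y \<in> K \<Longrightarrow> \<bar>norm x0 - 1\<bar> \<le> \<bar>norm y - 1\<bar>"
      using continuous_attains_inf[OF assms(1) False] by blast
    have "0 < \<bar>norm x0 - 1\<bar>" using x0(1) assms(2) by auto
    then show ?thesis using that x0(2) R by blast
  qed
qed

definition two_critical_points_on_circle :: "(complex \<Rightarrow> complex) \<Rightarrow> bool" where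
  "two_critical_points_on_circle f \<longleftrightarrow>
     (\<exists>z1 z2. z1 \<noteq> z2 \<and> z1 \<in> sphere 0 1 \<and> z2 \<in> sphere 0 1 \<and> deriv f z1 = 0 \<and> deriv f z2 = 0)"

lemma two_critical_points_if_sign_change:
  assumes p: "norm p \<noteq> 1" and q: "norm q \<noteq> 1"
    and a: "a \<in> sphere 0 1" "arg_derivative p q a < 0"
    and b: "b \<in> sphere 0 1" "0 < arg_derivative p q b"
  shows "two_critical_points_on_circle (blaschke p q)"
proof -
  have cont: "continuous_on (sphere 0 1) (arg_derivative p q)"
    unfolding arg_derivative_def poisson_kernel_def using p q
    by (intro continuous_intros) auto
  then obtain z1 z2 where z: "z1 \<noteq> z2" "z1 \<in> sphere 0 1" "z2 \<in> sphere 0 1"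
      "arg_derivative p q z1 = 0" "arg_derivative p q z2 = 0"
    using sphere_two_zeros[OF _ zero_less_one cont a(1) b(1) a(2) b(2)] by auto
  moreover have "deriv (blaschke p q) z = 0" if "norm z = 1" "arg_derivative p q z = 0" for z
    using blaschke_deriv_circle[OF that(1) p q] that(2) by simp
  ultimately show ?thesis unfolding two_critical_points_on_circle_def by auto
qed

lemma critical_points_inner_near_circle:
  assumes "0 < d" "1 + d \<le> norm p" "norm p \<le> R"
    and "norm q < 1" "1 - norm q < d / (8 * R^2)" "1 - norm q < d^2 / R^2"
  shows "two_critical_points_on_circle (blaschke p q)"
  using negative_point_inner_near_circle[of d p R q] positive_point_inner_near_circle[of d p R q]
    two_critical_points_if_sign_change[of p q] assms by force

lemma critical_points_outer_near_circle:
  assumes "0 < d" "norm q \<le> 1 - d" "1 < norm p" "norm p - 1 < d^2"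
  shows "two_critical_points_on_circle (blaschke p q)"
  using sign_change_outer_near_circle[OF assms] two_critical_points_if_sign_change[of p q] assms
  by force

theorem mainTheorem13:
  fixes K :: "complex set"
  assumes "compact K" and "K \<inter> sphere 0 1 = {}"
  shows "\<exists>\<delta>>0. \<forall>p q.
    ((p \<in> K \<and> norm p > 1 \<and> norm q < 1 \<and> infdist q (sphere 0 1) < \<delta>) \<or>
     (q \<in> K \<and> norm q < 1 \<and> norm p > 1 \<and> infdist p (sphere 0 1) < \<delta>)) \<longrightarrow>
    (\<exists>z1 z2. z1 \<noteq> z2 \<and> z1 \<in> sphere 0 1 \<and> z2 \<in> sphere 0 1 \<and>
       deriv (blaschke p q) z1 = 0 \<and> deriv (blaschke p q) z2 = 0)"
proof -
  obtain d R where d: "0 < d" and R: "0 < R"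
    and K: "\<And>x. x \<in> K \<Longrightarrow> d \<le> \<bar>norm x - 1\<bar> \<and> norm x \<le> R"
    using compact_avoiding_circle_bounds[OF assms] by blast
  define \<delta> where "\<delta> = min (min (d^2 / R^2) (d / (8 * R^2))) (d^2)"
  have \<delta>_pos: "0 < \<delta>" using d R by (simp add: \<delta>_def)
  have \<delta>_le: "\<delta> \<le> d^2 / R^2" "\<delta> \<le> d / (8 * R^2)" "\<delta> \<le> d^2"
    unfolding \<delta>_def by linarith+
  have "two_critical_points_on_circle (blaschke p q)"
    if "p \<in> K" "1 < norm p" "norm q < 1" "infdist q (sphere 0 1) < \<delta>" for p q
    using critical_points_inner_near_circle[OF d, of p R q] that K[of p]
      infdist_unit_circle_lower[of q] \<delta>_le by auto
  moreover have "two_critical_points_on_circle (blaschke p q)"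
    if "q \<in> K" "norm q < 1" "1 < norm p" "infdist p (sphere 0 1) < \<delta>" for p q
    using critical_points_outer_near_circle[OF d, of q p] that K[of q]
      infdist_unit_circle_lower[of p] \<delta>_le by auto
  ultimately show ?thesis
    using \<delta>_pos unfolding two_critical_points_on_circle_def by blast
qed

end
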